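(* Let $\mathscr{H}$ be a finite-dimensional complex Hilbert space, let $A=\{a_k\}_{k=1}^{m}$ be a tight frame of $\mathscr{H}$ with frame bound $\alpha>0$ and $B=\{b_j\}_{j=1}^{n}$ a tight frame of $\mathscr{H}$ with frame bound $\beta>0$, and suppose $A$ and $B$ are $s$-order incompatible. Write $I=\{1,\dots,m\}$, $J=\{1,\dots,n\}$. For nonempty $S\subseteq I$, $T\subseteq J$ let $C_{S,T}$ be the optimal lower frame bound of the family $\{a_k\}_{k\in S^c}\cup\{b_j\}_{j\in T^c}$, i.e. the largest $C\ge 0$ with $C\|x\|^2\le\sum_{k\in S^c}|\langle x,a_k\rangle|^2+\sum_{j\in T^c}|\langle x,b_j\rangle|^2$ for all $x\in\mathscr{H}$, and let $C_s=\min\{C_{S,T}: S\subseteq I,\ T\subseteq J \text{ nonempty},\ |S|+|T|<s\}$ (with $C_s=+\infty$ if no such pair exists). Then $C_s>0$, and with $C=1/\min\{\alpha,\beta,C_s\}$, for all subsets $S\subseteq I$, $T\subseteq J$ with $|S|+|T|<s$ and all $x\in\mathscr{H}$, $$\|x\|^2\le C\Big(\sum_{k\in S^c}|\langle x,a_k\rangle|^2+\sum_{j\in T^c}|\langle x,b_j\rangle|^2\Big).$$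
   Context: A finite family $\{a_k\}_{k=1}^{m}\subset\mathscr{H}$ is a tight frame with frame bound $\alpha>0$ if $\sum_{k=1}^{m}|\langle x,a_k\rangle|^2=\alpha\|x\|^2$ for all $x\in\mathscr{H}$. The tight frames $A$ (bound $\alpha$) and $B$ (bound $\beta$) are called $s$-order incompatible, for an integer $s$, if: (1) for all nonempty $S\subseteq I$, $T\subseteq J$ with $|S|+|T|<s$ and every nonzero $x\in\mathscr{H}$, the two equalities $\sum_{k\in S}|\langle x,a_k\rangle|^2=\alpha\|x\|^2$ and $\sum_{j\in T}|\langle x,b_j\rangle|^2=\beta\|x\|^2$ do not both hold; and (2) there exist nonempty $S\subseteq I$, $T\subseteq J$ with $|S|+|T|=s$ and a nonzero $x\in\mathscr{H}$ for which both equalities hold. $S^c=I\setminus S$, $T^c=J\setminus T$. *)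

theory Defs
  imports "HOL-Analysis.Analysis"
begin

text \<open>A finite-dimensional complex Hilbert space is modelled (up to isometric
isomorphism) as complex^'d with the standard inner product, linear in the
first argument.\<close>

definition cinner :: "complex^'d \<Rightarrow> complex^'d \<Rightarrow> complex" where
  "cinner x y = (\<Sum>i\<in>UNIV. x$i * cnj (y$i))"

definition frame_sum :: "(nat \<Rightarrow> complex^'d) \<Rightarrow> nat set \<Rightarrow> complex^'d \<Rightarrow> real" where
  "frame_sum a K x = (\<Sum>k\<in>K. (cmod (cinner x (a k)))^2)"

definition tight_frame :: "(nat \<Rightarrow> complex^'d) \<Rightarrow> nat \<Rightarrow> real \<Rightarrow> bool" where
  "tight_frame a m \<alpha> \<longleftrightarrow> \<alpha> > 0 \<and> (\<forall>x. frame_sum a {1..m} x = \<alpha> * (norm x)^2)"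

definition s_order_incompatible ::
  "(nat \<Rightarrow> complex^'d) \<Rightarrow> nat \<Rightarrow> real \<Rightarrow> (nat \<Rightarrow> complex^'d) \<Rightarrow> nat \<Rightarrow> real \<Rightarrow> nat \<Rightarrow> bool" where
  "s_order_incompatible a m \<alpha> b n \<beta> s \<longleftrightarrow>
     (\<forall>S T x. S \<subseteq> {1..m} \<and> T \<subseteq> {1..n} \<and> S \<noteq> {} \<and> T \<noteq> {} \<and> card S + card T < s \<and> x \<noteq> 0
        \<longrightarrow> \<not> (frame_sum a S x = \<alpha> * (norm x)^2 \<and> frame_sum b T x = \<beta> * (norm x)^2)) \<and>
     (\<exists>S T x. S \<subseteq> {1..m} \<and> T \<subseteq> {1..n} \<and> S \<noteq> {} \<and> T \<noteq> {} \<and> card S + card T = s \<and> x \<noteq> 0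
        \<and> frame_sum a S x = \<alpha> * (norm x)^2 \<and> frame_sum b T x = \<beta> * (norm x)^2)"

definition opt_lower_bound ::
  "(nat \<Rightarrow> complex^'d) \<Rightarrow> nat set \<Rightarrow> (nat \<Rightarrow> complex^'d) \<Rightarrow> nat set \<Rightarrow> real" where
  "opt_lower_bound a K b L =
     (GREATEST C. C \<ge> 0 \<and> (\<forall>x. C * (norm x)^2 \<le> frame_sum a K x + frame_sum b L x))"

definition C_ST ::
  "(nat \<Rightarrow> complex^'d) \<Rightarrow> nat \<Rightarrow> (nat \<Rightarrow> complex^'d) \<Rightarrow> nat \<Rightarrow> nat set \<Rightarrow> nat set \<Rightarrow> real" where
  "C_ST a m b n S T = opt_lower_bound a ({1..m} - S) b ({1..n} - T)"

definition C_s ::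
  "(nat \<Rightarrow> complex^'d) \<Rightarrow> nat \<Rightarrow> (nat \<Rightarrow> complex^'d) \<Rightarrow> nat \<Rightarrow> nat \<Rightarrow> ereal" where
  "C_s a m b n s =
     (let P = {(S, T). S \<subseteq> {1..m} \<and> T \<subseteq> {1..n} \<and> S \<noteq> {} \<and> T \<noteq> {} \<and> card S + card T < s}
      in if P = {} then \<infinity> else Min ((\<lambda>(S, T). ereal (C_ST a m b n S T)) ` P))"

end

theory Submission
  imports Defs
begin

text \<open>For nonempty S, T with |S| + |T| < s, the quadratic form
  x \<mapsto> \<Sum>_{S^c} |<x,a_k>|^2 + \<Sum>_{T^c} |<x,b_j>|^2 is continuous and 2-homogeneous, so its
  optimal lower bound C_{S,T} is its minimum on the compact unit sphere. If that minimum
  were 0 at a unit vector x, then by tightness all of the energy of x in A would lie on S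
  and all of its energy in B on T, contradicting incompatibility of order s. Hence every
  C_{S,T} is positive, and so is their finite minimum C_s. When S or T is empty, the sum
  already contains a whole tight frame and is at least \<alpha>|x|^2 or \<beta>|x|^2.\<close>

lemma cinner_scaleR_left: "cinner (r *\<^sub>R x) y = of_real r * cinner x y"
  unfolding cinner_def vector_scaleR_component
  by (simp add: sum_distrib_left scaleR_conv_of_real mult.assoc)

lemma continuous_on_cinner_left: "continuous_on UNIV (\<lambda>x. cinner x y)"
  unfolding cinner_def by (intro continuous_intros)

lemma frame_sum_scaleR: "frame_sum a K (r *\<^sub>R x) = r\<^sup>2 * frame_sum a K x"
  unfolding frame_sum_def cinner_scaleR_left
  by (simp add: sum_distrib_left norm_mult power_mult_distrib)

lemma frame_sum_nonneg: "frame_sum a K x \<ge> 0"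
  unfolding frame_sum_def by (simp add: sum_nonneg)

lemma continuous_on_frame_sum: "continuous_on UNIV (frame_sum a K)"
  unfolding frame_sum_def
  by (intro continuous_intros continuous_on_compose2[OF _ continuous_on_cinner_left]) auto

lemma frame_sum_Diff:
  assumes "finite A" "K \<subseteq> A"
  shows "frame_sum a A x = frame_sum a K x + frame_sum a (A - K) x"
  unfolding frame_sum_def by (simp add: sum.subset_diff[OF assms(2,1)] add.commute)

lemma tight_frame_Diff:
  assumes "tight_frame a m \<alpha>" "K \<subseteq> {1..m}"
  shows "frame_sum a K x + frame_sum a ({1..m} - K) x = \<alpha> * (norm x)\<^sup>2"
  using assms frame_sum_Diff[of "{1..m}" K a x] by (simp add: tight_frame_def)

lemma Greatest_quadratic_lower_bound:
  fixes f :: "'a::{real_normed_vector, perfect_space, heine_borel} \<Rightarrow> real"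
  assumes cont: "continuous_on UNIV f"
    and homogeneous: "\<And>r x. f (r *\<^sub>R x) = r\<^sup>2 * f x"
    and nonneg: "\<And>x. f x \<ge> 0"
  obtains x0 where "norm x0 = 1" "(GREATEST C. C \<ge> 0 \<and> (\<forall>x. C * (norm x)\<^sup>2 \<le> f x)) = f x0"
    "\<And>x. f x0 * (norm x)\<^sup>2 \<le> f x"
proof -
  obtain x0 where x0: "x0 \<in> sphere 0 1" "\<And>y. y \<in> sphere 0 1 \<Longrightarrow> f x0 \<le> f y"
    using continuous_attains_inf[of "sphere 0 1" f] continuous_on_subset[OF cont]
    by (metis compact_sphere sphere_eq_empty subset_UNIV zero_less_one not_less_iff_gr_or_eq)
  have bound: "f x0 * (norm x)\<^sup>2 \<le> f x" for x
  proof (cases "x = 0")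
    case True
    then show ?thesis using nonneg by simp
  next
    case False
    then have "f x0 \<le> f ((1 / norm x) *\<^sub>R x)"
      using x0(2) by simp
    also have "\<dots> = f x / (norm x)\<^sup>2"
      using homogeneous[of "1 / norm x" x] by (simp add: power_divide)
    finally show ?thesis using False by (simp add: field_simps)
  qed
  have "norm x0 = 1" using x0(1) by simp
  moreover have "(GREATEST C. C \<ge> 0 \<and> (\<forall>x. C * (norm x)\<^sup>2 \<le> f x)) = f x0"
  proof (rule Greatest_equality)
    fix C assume "0 \<le> C \<and> (\<forall>x. C * (norm x)\<^sup>2 \<le> f x)"
    then show "C \<le> f x0" using \<open>norm x0 = 1\<close> by (metis mult.right_neutral power_one)
  qed (use nonneg bound in auto)
  ultimately show ?thesis using that bound by blast
qed

lemma opt_lower_bound_minimum: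
  fixes a b :: "nat \<Rightarrow> complex^'d"
  obtains x0 where "norm x0 = 1"
    "opt_lower_bound a K b L = frame_sum a K x0 + frame_sum b L x0"
    "\<And>x. opt_lower_bound a K b L * (norm x)\<^sup>2 \<le> frame_sum a K x + frame_sum b L x"
proof -
  let ?f = "\<lambda>x. frame_sum a K x + frame_sum b L x"
  have "continuous_on UNIV ?f"
    by (intro continuous_on_add continuous_on_frame_sum)
  moreover have "?f (r *\<^sub>R x) = r\<^sup>2 * ?f x" for r x
    by (simp add: frame_sum_scaleR distrib_left)
  moreover have "?f x \<ge> 0" for x
    by (intro add_nonneg_nonneg frame_sum_nonneg)
  ultimately obtain x0 where "norm x0 = 1" and min: "opt_lower_bound a K b L = ?f x0"
      and "\<And>x. ?f x0 * (norm x)\<^sup>2 \<le> ?f x"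
    unfolding opt_lower_bound_def by (rule Greatest_quadratic_lower_bound[of ?f]) blast
  then show ?thesis using that unfolding min by blast
qed

lemma C_ST_pos:
  assumes "tight_frame a m \<alpha>" "tight_frame b n \<beta>" "S \<subseteq> {1..m}" "T \<subseteq> {1..n}"
    and not_both_tight: "\<And>x. x \<noteq> 0 \<Longrightarrow>
      \<not> (frame_sum a S x = \<alpha> * (norm x)\<^sup>2 \<and> frame_sum b T x = \<beta> * (norm x)\<^sup>2)"
  shows "C_ST a m b n S T > 0"
proof (rule ccontr)
  assume "\<not> C_ST a m b n S T > 0"
  moreover obtain x0 where "norm x0 = 1" and
    min: "C_ST a m b n S T = frame_sum a ({1..m} - S) x0 + frame_sum b ({1..n} - T) x0"
    unfolding C_ST_def by (rule opt_lower_bound_minimum)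
  ultimately have "frame_sum a ({1..m} - S) x0 = 0" "frame_sum b ({1..n} - T) x0 = 0"
    using frame_sum_nonneg[of a "{1..m} - S" x0] frame_sum_nonneg[of b "{1..n} - T" x0]
    by linarith+
  then have "frame_sum a S x0 = \<alpha> * (norm x0)\<^sup>2" "frame_sum b T x0 = \<beta> * (norm x0)\<^sup>2"
    using tight_frame_Diff[OF assms(1,3), of x0] tight_frame_Diff[OF assms(2,4), of x0] by simp_all
  moreover have "x0 \<noteq> 0" using \<open>norm x0 = 1\<close> by auto
  ultimately show False using not_both_tight by blast
qed

definition admissible_pairs :: "nat \<Rightarrow> nat \<Rightarrow> nat \<Rightarrow> (nat set \<times> nat set) set" where
  "admissible_pairs m n s =
     {(S, T). S \<subseteq> {1..m} \<and> T \<subseteq> {1..n} \<and> S \<noteq> {} \<and> T \<noteq> {} \<and> card S + card T < s}"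

lemma finite_admissible_pairs: "finite (admissible_pairs m n s)"
proof (rule finite_subset)
  show "admissible_pairs m n s \<subseteq> Pow {1..m} \<times> Pow {1..n}"
    unfolding admissible_pairs_def by auto
qed simp

lemma C_s_admissible_pairs:
  "C_s a m b n s = (if admissible_pairs m n s = {} then \<infinity>
     else Min ((\<lambda>(S, T). ereal (C_ST a m b n S T)) ` admissible_pairs m n s))"
  unfolding C_s_def admissible_pairs_def Let_def by simp

lemma s_order_incompatible_C_ST_pos:
  assumes "tight_frame a m \<alpha>" "tight_frame b n \<beta>" "s_order_incompatible a m \<alpha> b n \<beta> s"
    and "(S, T) \<in> admissible_pairs m n s"
  shows "C_ST a m b n S T > 0"
proof (rule C_ST_pos[OF assms(1,2)])
  from assms(4) show "S \<subseteq> {1..m}" "T \<subseteq> {1..n}"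
    by (simp_all add: admissible_pairs_def)
  from assms(3,4) show "\<not> (frame_sum a S x = \<alpha> * (norm x)\<^sup>2 \<and> frame_sum b T x = \<beta> * (norm x)\<^sup>2)"
    if "x \<noteq> 0" for x
    using that unfolding s_order_incompatible_def admissible_pairs_def by blast
qed

lemma C_s_pos:
  assumes "\<And>S T. (S, T) \<in> admissible_pairs m n s \<Longrightarrow> C_ST a m b n S T > 0"
  shows "C_s a m b n s > 0"
  using assms finite_admissible_pairs[of m n s]
  by (auto simp: C_s_admissible_pairs Min_gr_iff)

lemma C_s_le_C_ST:
  assumes "(S, T) \<in> admissible_pairs m n s"
  shows "C_s a m b n s \<le> ereal (C_ST a m b n S T)"
  using assms finite_admissible_pairs[of m n s]
  by (auto simp: C_s_admissible_pairs intro!: Min_le)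

lemma real_of_ereal_min_bounds:
  fixes \<alpha> \<beta> :: real and c :: ereal
  assumes "\<alpha> > 0" "\<beta> > 0" "c > 0"
  defines "\<mu> \<equiv> real_of_ereal (min (ereal \<alpha>) (min (ereal \<beta>) c))"
  shows "0 < \<mu>" "\<mu> \<le> \<alpha>" "\<mu> \<le> \<beta>" "ereal \<mu> \<le> c"
  using assms by (cases c; auto simp: min_def)+

lemma complement_frame_sums_lower_bound:
  fixes x :: "complex^'d"
  assumes "tight_frame a m \<alpha>" "tight_frame b n \<beta>"
    and "\<mu> \<le> \<alpha>" "\<mu> \<le> \<beta>" "S \<noteq> {} \<Longrightarrow> T \<noteq> {} \<Longrightarrow> \<mu> \<le> C_ST a m b n S T"
  shows "\<mu> * (norm x)\<^sup>2 \<le> frame_sum a ({1..m} - S) x + frame_sum b ({1..n} - T) x"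
proof -
  let ?sum = "frame_sum a ({1..m} - S) x + frame_sum b ({1..n} - T) x"
  have A: "0 \<le> frame_sum a ({1..m} - S) x" and B: "0 \<le> frame_sum b ({1..n} - T) x"
    by (rule frame_sum_nonneg)+
  consider "S = {}" | "T = {}" | "S \<noteq> {}" "T \<noteq> {}" by blast
  then show ?thesis
  proof cases
    case 1
    have "\<mu> * (norm x)\<^sup>2 \<le> \<alpha> * (norm x)\<^sup>2" using assms(3) by (simp add: mult_right_mono)
    also have "\<dots> \<le> ?sum" using 1 B assms(1) by (simp add: tight_frame_def)
    finally show ?thesis .
  next
    case 2
    have "\<mu> * (norm x)\<^sup>2 \<le> \<beta> * (norm x)\<^sup>2" using assms(4) by (simp add: mult_right_mono)
    also have "\<dots> \<le> ?sum" using 2 A assms(2) by (simp add: tight_frame_def)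
    finally show ?thesis .
  next
    case 3
    have "\<mu> * (norm x)\<^sup>2 \<le> C_ST a m b n S T * (norm x)\<^sup>2"
      using 3 assms(5) by (simp add: mult_right_mono)
    also have "\<dots> \<le> ?sum"
      unfolding C_ST_def by (rule opt_lower_bound_minimum) blast
    finally show ?thesis .
  qed
qed

theorem mainTheorem4:
  fixes a b :: "nat \<Rightarrow> complex^'d" and m n s :: nat and \<alpha> \<beta> :: real
  assumes "tight_frame a m \<alpha>" and "tight_frame b n \<beta>"
    and "s_order_incompatible a m \<alpha> b n \<beta> s"
  shows "C_s a m b n s > 0 \<and>
    (let C = 1 / real_of_ereal (min (ereal \<alpha>) (min (ereal \<beta>) (C_s a m b n s)))
     in \<forall>S T (x :: complex^'d). S \<subseteq> {1..m} \<longrightarrow> T \<subseteq> {1..n} \<longrightarrow> card S + card T < s \<longrightarrow>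
          (norm x)^2 \<le> C * (frame_sum a ({1..m} - S) x + frame_sum b ({1..n} - T) x))"
proof -
  have "C_s a m b n s > 0"
    using assms by (intro C_s_pos s_order_incompatible_C_ST_pos)
  define \<mu> where "\<mu> = real_of_ereal (min (ereal \<alpha>) (min (ereal \<beta>) (C_s a m b n s)))"
  have "\<alpha> > 0" "\<beta> > 0" using assms(1,2) by (simp_all add: tight_frame_def)
  note \<mu> = real_of_ereal_min_bounds[OF this \<open>C_s a m b n s > 0\<close>, folded \<mu>_def]
  have "(norm x)\<^sup>2 \<le> 1 / \<mu> * (frame_sum a ({1..m} - S) x + frame_sum b ({1..n} - T) x)"
    if "S \<subseteq> {1..m}" "T \<subseteq> {1..n}" "card S + card T < s" for S T and x :: "complex^'d"
  proof -
    have "\<mu> \<le> C_ST a m b n S T" if "S \<noteq> {}" "T \<noteq> {}"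
    proof -
      have "(S, T) \<in> admissible_pairs m n s"
        using that \<open>S \<subseteq> {1..m}\<close> \<open>T \<subseteq> {1..n}\<close> \<open>card S + card T < s\<close>
        by (simp add: admissible_pairs_def)
      then show ?thesis using \<mu>(4) C_s_le_C_ST order_trans ereal_less_eq(3) by blast
    qed
    then have "\<mu> * (norm x)\<^sup>2 \<le> frame_sum a ({1..m} - S) x + frame_sum b ({1..n} - T) x"
      using complement_frame_sums_lower_bound assms(1,2) \<mu>(2,3) by blast
    then show ?thesis using \<mu>(1) by (simp add: field_simps)
  qed
  then show ?thesis using \<open>C_s a m b n s > 0\<close> unfolding \<mu>_def Let_def by blast
qed

end
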